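(* Let $\alpha\in\mathbb{R}$, let $\mathbb{Q}[x]^+_{x=\alpha}=\{p\in\mathbb{Q}[x]: p(\alpha)>0\}$, and suppose $\mathbb{Q}[x]^+_{x=\alpha}=H_1\sqcup H_2$ with $H_1,H_2$ disjoint subsets, each closed under addition and multiplication. If, for some $j\in\{1,2\}$, every polynomial of degree $1$ in $\mathbb{Q}[x]^+_{x=\alpha}$ belongs to $H_j$, then $H_j=\mathbb{Q}[x]^+_{x=\alpha}$. *)

theory Defs
  imports Complex_Main "HOL-Computational_Algebra.Polynomial"
begin

definition Qpos_at :: "real \<Rightarrow> rat poly set" where
  "Qpos_at \<alpha> = {p. poly (map_poly of_rat p) \<alpha> > 0}"

end

theory Submission
  imports Defs
begin

text \<open>Every positive rational constant c is the sum (x - t) + (c + t - x) of two rational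
linear polynomials positive at \<open>\<alpha>\<close>. If p is positive at \<open>\<alpha>\<close> of degree n \<ge> 1 with leading
coefficient L, pick rational linear polynomials l1 (monic) and l2 (leading coefficient sgn L),
both positive at \<open>\<alpha>\<close> but with values there below min 1 (p(\<alpha>) / |L|). Then |L| l1^(n-1) l2 is
built from linear polynomials and constants by products, has the leading term of p and is
smaller than p at \<open>\<alpha>\<close>; so p minus it is positive at \<open>\<alpha>\<close> of lower degree, and induction on
the degree puts p into any set closed under sums and products that contains the rational linear
polynomials positive at \<open>\<alpha>\<close>.\<close>

lemma map_poly_of_rat_diff:
  "map_poly (of_rat :: rat \<Rightarrow> 'a :: field_char_0) (p - q) = map_poly of_rat p - map_poly of_rat q"
  by (rule poly_eqI) (simp add: coeff_map_poly of_rat_diff)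

lemma map_poly_of_rat_mult:
  "map_poly (of_rat :: rat \<Rightarrow> 'a :: field_char_0) (p * q) = map_poly of_rat p * map_poly of_rat q"
  by (rule poly_eqI) (simp add: coeff_map_poly coeff_mult of_rat_sum of_rat_mult)

lemma map_poly_of_rat_power:
  "map_poly (of_rat :: rat \<Rightarrow> 'a :: field_char_0) (p ^ n) = map_poly of_rat p ^ n"
  by (induction n) (simp_all add: map_poly_of_rat_mult)

lemma map_poly_of_rat_smult:
  "map_poly (of_rat :: rat \<Rightarrow> 'a :: field_char_0) (smult c p) = smult (of_rat c) (map_poly of_rat p)"
  by (rule map_poly_smult) (simp_all add: of_rat_mult)

lemma poly_map_poly_of_rat_pCons [simp]:
  "poly (map_poly (of_rat :: rat \<Rightarrow> 'a :: field_char_0) (pCons a p)) x =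
     of_rat a + x * poly (map_poly of_rat p) x"
  by (simp add: map_poly_pCons)

lemma mem_Qpos_at: "p \<in> Qpos_at \<alpha> \<longleftrightarrow> 0 < poly (map_poly of_rat p) \<alpha>"
  by (simp add: Qpos_at_def)

lemma degree_diff_less_of_lead_coeff_eq:
  fixes p q :: "'a :: comm_ring poly"
  assumes "degree q = degree p" "lead_coeff q = lead_coeff p" "degree p > 0"
  shows "degree (p - q) < degree p"
proof (rule degree_lessI)
  show "\<forall>k\<ge>degree p. coeff (p - q) k = 0"
    using assms by (auto simp: le_less coeff_eq_0)
qed (use assms in simp)

lemma exists_linear_Qpos_at_below:
  assumes "\<epsilon> > 0"
  obtains c where "[:c, s:] \<in> Qpos_at \<alpha>" "poly (map_poly of_rat [:c, s:]) \<alpha> < \<epsilon>"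
proof -
  obtain c where "- (\<alpha> * of_rat s) < of_rat c" "of_rat c < \<epsilon> - \<alpha> * of_rat s"
    using of_rat_dense[of "- (\<alpha> * of_rat s)" "\<epsilon> - \<alpha> * of_rat s"] assms by auto
  then show thesis
    by (intro that[of c]) (auto simp: mem_Qpos_at)
qed

lemma Qpos_at_split_leading_term:
  assumes p: "p \<in> Qpos_at \<alpha>" and deg: "degree p > 0"
  obtains c l1 l2 where "c > 0"
    "l1 \<in> Qpos_at \<alpha>" "degree l1 = 1" "l2 \<in> Qpos_at \<alpha>" "degree l2 = 1"
    "p - smult c (l1 ^ (degree p - 1) * l2) \<in> Qpos_at \<alpha>"
    "degree (p - smult c (l1 ^ (degree p - 1) * l2)) < degree p"
proof -
  define n where "n = degree p"
  define L where "L = lead_coeff p"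
  define e where "e = poly (map_poly of_rat p) \<alpha>"
  have e: "e > 0" using p by (simp add: mem_Qpos_at e_def)
  have L: "L \<noteq> 0" using deg by (auto simp: L_def)
  define \<epsilon> where "\<epsilon> = min 1 (e / of_rat \<bar>L\<bar>)"
  have "\<epsilon> > 0" using e L by (simp add: \<epsilon>_def)
  obtain a where l1: "[:a, 1:] \<in> Qpos_at \<alpha>" "poly (map_poly of_rat [:a, 1:]) \<alpha> < \<epsilon>"
    using exists_linear_Qpos_at_below[OF \<open>\<epsilon> > 0\<close>] .
  obtain b where l2: "[:b, sgn L:] \<in> Qpos_at \<alpha>" "poly (map_poly of_rat [:b, sgn L:]) \<alpha> < \<epsilon>"
    using exists_linear_Qpos_at_below[OF \<open>\<epsilon> > 0\<close>] .
  define T where "T = smult \<bar>L\<bar> ([:a, 1:] ^ (n - 1) * [:b, sgn L:])"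
  have "degree ([:a, 1:] ^ (n - 1) * [:b, sgn L:]) = n - 1 + 1"
    using L by (subst degree_mult_eq) (simp_all add: degree_linear_power sgn_0_0)
  then have "degree T = n"
    using deg L by (simp add: T_def n_def)
  moreover have "lead_coeff T = L"
    unfolding T_def lead_coeff_smult lead_coeff_mult lead_coeff_power
    using L by (simp add: sgn_0_0 abs_mult_sgn)
  ultimately have "degree (p - T) < n"
    using deg unfolding n_def L_def by (rule degree_diff_less_of_lead_coeff_eq)
  define u where "u = poly (map_poly of_rat [:a, 1:]) \<alpha>"
  define w where "w = poly (map_poly of_rat [:b, sgn L:]) \<alpha>"
  have "poly (map_poly of_rat T) \<alpha> = of_rat \<bar>L\<bar> * u ^ (n - 1) * w"
    unfolding T_def u_def w_def map_poly_of_rat_smult map_poly_of_rat_mult map_poly_of_rat_power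
    by (simp only: poly_smult poly_mult poly_power mult.assoc)
  also have "\<dots> \<le> of_rat \<bar>L\<bar> * 1 * w"
    using l1 l2 by (intro mult_mono power_le_one) (auto simp: u_def w_def mem_Qpos_at \<epsilon>_def)
  also have "\<dots> < e"
    using l2 L by (simp add: w_def \<epsilon>_def pos_less_divide_eq mult.commute)
  finally have "p - T \<in> Qpos_at \<alpha>"
    by (simp add: mem_Qpos_at map_poly_of_rat_diff e_def)
  show thesis
    using that[of "\<bar>L\<bar>" "[:a, 1:]" "[:b, sgn L:]"] l1(1) l2(1) L
      \<open>degree (p - T) < n\<close> \<open>p - T \<in> Qpos_at \<alpha>\<close>
    unfolding T_def n_def by (simp add: sgn_0_0)
qed

locale Qpos_at_subsemiring =
  fixes \<alpha> :: real and H :: "rat poly set"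
  assumes subset: "H \<subseteq> Qpos_at \<alpha>"
    and add_closed: "p \<in> H \<Longrightarrow> q \<in> H \<Longrightarrow> p + q \<in> H"
    and mult_closed: "p \<in> H \<Longrightarrow> q \<in> H \<Longrightarrow> p * q \<in> H"
    and linear_mem: "p \<in> Qpos_at \<alpha> \<Longrightarrow> degree p = 1 \<Longrightarrow> p \<in> H"
begin

lemma const_mem:
  assumes "c > 0"
  shows "[:c:] \<in> H"
proof -
  have "(0 :: real) < of_rat c" using assms by simp
  then obtain t where t: "[:t, 1:] \<in> Qpos_at \<alpha>" "poly (map_poly of_rat [:t, 1:]) \<alpha> < of_rat c"
    by (rule exists_linear_Qpos_at_below)
  have "[:c - t, -1:] \<in> Qpos_at \<alpha>"
    using t(2) by (simp add: mem_Qpos_at of_rat_diff of_rat_minus)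
  with t(1) have "[:t, 1:] + [:c - t, -1:] \<in> H"
    by (intro add_closed linear_mem) simp_all
  then show ?thesis by simp
qed

lemma power_mem: "p \<in> H \<Longrightarrow> p ^ n \<in> H"
  using const_mem[of 1] by (induction n) (auto intro: mult_closed simp: one_pCons)

lemma smult_mem: "c > 0 \<Longrightarrow> p \<in> H \<Longrightarrow> smult c p \<in> H"
  using mult_closed[OF const_mem] by simp

lemma Qpos_at_imp_mem: "p \<in> Qpos_at \<alpha> \<Longrightarrow> p \<in> H"
proof (induction "degree p" arbitrary: p rule: less_induct)
  case less
  show ?case
  proof (cases "degree p = 0")
    case True
    then have "p = [:coeff p 0:]" by (rule degree_0_id[symmetric])
    moreover have "coeff p 0 > 0"
      using less.prems by (subst (asm) \<open>p = _\<close>) (simp add: mem_Qpos_at)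
    ultimately show ?thesis using const_mem by metis
  next
    case False
    then obtain c l1 l2 where "c > 0" and l: "l1 \<in> H" "l2 \<in> H"
      and r: "p - smult c (l1 ^ (degree p - 1) * l2) \<in> Qpos_at \<alpha>"
             "degree (p - smult c (l1 ^ (degree p - 1) * l2)) < degree p"
      using Qpos_at_split_leading_term[OF less.prems] linear_mem by (metis neq0_conv)
    have "smult c (l1 ^ (degree p - 1) * l2) \<in> H"
      using \<open>c > 0\<close> l by (intro smult_mem mult_closed power_mem)
    with less.hyps[OF r(2) r(1)] show ?thesis
      by (metis add_closed diff_add_cancel)
  qed
qed

lemma eq_Qpos_at: "H = Qpos_at \<alpha>"
  using subset Qpos_at_imp_mem by blast

end

theorem lemma4p3:
  fixes \<alpha> :: real and H1 H2 :: "rat poly set" and j :: nat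
  assumes part: "Qpos_at \<alpha> = H1 \<union> H2"
    and disj: "H1 \<inter> H2 = {}"
    and add1: "\<And>p q. p \<in> H1 \<Longrightarrow> q \<in> H1 \<Longrightarrow> p + q \<in> H1"
    and mult1: "\<And>p q. p \<in> H1 \<Longrightarrow> q \<in> H1 \<Longrightarrow> p * q \<in> H1"
    and add2: "\<And>p q. p \<in> H2 \<Longrightarrow> q \<in> H2 \<Longrightarrow> p + q \<in> H2"
    and mult2: "\<And>p q. p \<in> H2 \<Longrightarrow> q \<in> H2 \<Longrightarrow> p * q \<in> H2"
    and j: "j \<in> {1, 2}"
    and lin: "\<And>p. p \<in> Qpos_at \<alpha> \<Longrightarrow> degree p = 1 \<Longrightarrow>
                 p \<in> (if j = 1 then H1 else H2)"
  shows "(if j = 1 then H1 else H2) = Qpos_at \<alpha>"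
proof -
  have "Qpos_at_subsemiring \<alpha> (if j = 1 then H1 else H2)"
    by unfold_locales (use part add1 mult1 add2 mult2 lin in auto)
  then show ?thesis by (rule Qpos_at_subsemiring.eq_Qpos_at)
qed

end
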